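(* Let $n\ge 2$ be an integer, let $\log$ denote the base-$2$ logarithm, let $0<\gamma<1/2$, and for every integer $i\ge 0$ define $$\varepsilon^{(i)}=\frac{\gamma^{i+1}}{10\log(n)\,(i+1)^2}.$$ Then for every integer $k\ge 0$, $$\sum_{\substack{i,j\ge 0\\ i+j=k}} \varepsilon^{(i)}\varepsilon^{(j)}+\sum_{\substack{i,j\ge 0\\ i+j=k-1}} \varepsilon^{(i)}\varepsilon^{(j)} \le \frac{\varepsilon^{(k)}}{\log(n)}.$$ (An empty sum, e.g. the second sum when $k=0$, equals $0$.) *)

theory Defs
  imports Complex_Main
begin

definition eps :: "real \<Rightarrow> nat \<Rightarrow> nat \<Rightarrow> real" where
  "eps \<gamma> n i = \<gamma> ^ (i + 1) / (10 * log 2 (real n) * (real i + 1)^2)"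

end

(* Write c i = 1 / (i + 1)^2, so that eps i = gamma^(i+1) c i / (10 log n). Along an
   antidiagonal i + j = m every product eps i * eps j carries the same factor
   gamma^(m+2) / (10 log n)^2, and what remains is the convolution of c with itself.
   Since (i + 1) + (j + 1) = m + 2, we have (m + 2)^2 c i c j = (1/(i+1) + 1/(j+1))^2
   <= 2 c i + 2 c j, and the Basel sum pi^2/6 <= 5/3 bounds the convolution by
   (20/3) / (m + 2)^2. Hence the antidiagonal sum m is at most (2/3) eps (m+1) / log n.
   For m = k - 1 this is 2/3 of the right-hand side; for m = k the bound
   eps (k+1) <= gamma eps k <= eps k / 2 gives the remaining 1/3. *)
theory Submission
  imports Defs "HOL-Analysis.Gamma_Function"
begin

lemma sum_inverse_squares_le_five_thirds:
  assumes "finite I"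
  shows "(\<Sum>i\<in>I. 1 / (real i + 1)^2) \<le> 5/3"
proof -
  have basel: "(\<lambda>i. 1 / (real i + 1)^2) sums (pi^2 / 6)"
    using inverse_squares_sums by (simp add: add.commute)
  have "(\<Sum>i\<in>I. 1 / (real i + 1)^2) \<le> (\<Sum>i. 1 / (real i + 1)^2)"
    using sums_summable[OF basel] assms by (intro sum_le_suminf) auto
  also have "\<dots> = pi^2 / 6"
    using sums_unique[OF basel] by simp
  also have "\<dots> \<le> 5/3"
  proof -
    have "pi \<le> 3.16"
      using pi_approx(2) by simp
    then have "pi * pi \<le> 3.16 * 3.16"
      using pi_gt_zero by (intro mult_mono) auto
    then show ?thesis by (simp add: power2_eq_square)
  qed
  finally show ?thesis .
qed

lemma sum_antidiagonal:
  fixes m :: nat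
  shows "(\<Sum>(i,j)\<in>{(i,j). i + j = m}. g i j) = (\<Sum>i\<le>m. g i (m - i))"
  by (rule sum.reindex_bij_witness[where i="\<lambda>i. (i, m - i)" and j=fst]) auto

lemma sum_antidiagonal_swap:
  fixes m :: nat
  shows "(\<Sum>(i,j)\<in>{(i,j). i + j = m}. g j i) = (\<Sum>(i,j)\<in>{(i,j). i + j = m}. g i j)"
  by (rule sum.reindex_bij_witness[where i=prod.swap and j=prod.swap]) auto

lemma inverse_squares_convolution_le:
  "(\<Sum>(i,j)\<in>{(i,j). i + j = m}. 1 / ((real i + 1)^2 * (real j + 1)^2)) \<le> (20/3) / (real m + 2)^2"
proof -
  have pointwise: "(real m + 2)^2 * (1 / ((real i + 1)^2 * (real j + 1)^2))
      \<le> 2 / (real i + 1)^2 + 2 / (real j + 1)^2" if "i + j = m" for i j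
  proof -
    define a b where "a = real i + 1" and "b = real j + 1"
    have pos: "a > 0" "b > 0" by (simp_all add: a_def b_def)
    have "real m + 2 = a + b" using that by (simp add: a_def b_def)
    then have "(real m + 2)^2 * (1 / (a^2 * b^2)) = (1/a + 1/b)^2"
      using pos by (simp add: field_simps power2_eq_square)
    also have "\<dots> \<le> 2 * (1/a)^2 + 2 * (1/b)^2"
      using sum_squares_ge_zero[of "1/a - 1/b" 0] by (simp add: power2_eq_square algebra_simps)
    finally show ?thesis by (simp add: a_def b_def power_divide)
  qed
  have "(real m + 2)^2 * (\<Sum>(i,j)\<in>{(i,j). i + j = m}. 1 / ((real i + 1)^2 * (real j + 1)^2))
      \<le> (\<Sum>(i,j)\<in>{(i,j). i + j = m}. 2 / (real i + 1)^2 + 2 / (real j + 1)^2)"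
    unfolding sum_distrib_left by (intro sum_mono) (use pointwise in auto)
  also have "\<dots> = 4 * (\<Sum>i\<le>m. 1 / (real i + 1)^2)"
    using sum_antidiagonal_swap[of "\<lambda>j _. 2 / (real j + 1)^2" m]
    by (simp add: sum.distrib sum_antidiagonal sum_distrib_left)
  also have "\<dots> \<le> 20/3"
    using sum_inverse_squares_le_five_thirds[of "{..m}"] by simp
  finally show ?thesis by (simp add: field_simps)
qed

lemma eps_mult_eps:
  "eps \<gamma> n i * eps \<gamma> n j
     = \<gamma>^(i + j + 2) / (10 * log 2 (real n))^2 * (1 / ((real i + 1)^2 * (real j + 1)^2))"
  by (simp add: eps_def power_add power2_eq_square mult_ac)

lemma eps_antidiagonal_sum:
  "(\<Sum>(i,j)\<in>{(i,j). i + j = m}. eps \<gamma> n i * eps \<gamma> n j)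
     = \<gamma>^(m + 2) / (10 * log 2 (real n))^2
       * (\<Sum>(i,j)\<in>{(i,j). i + j = m}. 1 / ((real i + 1)^2 * (real j + 1)^2))"
  unfolding sum_distrib_left by (intro sum.cong) (auto simp: eps_mult_eps)

lemma eps_antidiagonal_sum_le:
  assumes "0 \<le> \<gamma>"
  shows "(\<Sum>(i,j)\<in>{(i,j). i + j = m}. eps \<gamma> n i * eps \<gamma> n j)
     \<le> 2/3 * eps \<gamma> n (m + 1) / log 2 (real n)"
proof -
  have "(\<Sum>(i,j)\<in>{(i,j). i + j = m}. eps \<gamma> n i * eps \<gamma> n j)
      \<le> \<gamma>^(m + 2) / (10 * log 2 (real n))^2 * ((20/3) / (real m + 2)^2)"
    unfolding eps_antidiagonal_sum using assms
    by (intro mult_left_mono inverse_squares_convolution_le) simp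
  also have "\<dots> = 2/3 * eps \<gamma> n (m + 1) / log 2 (real n)"
    by (simp add: eps_def power2_eq_square add.commute)
  finally show ?thesis .
qed

lemma log2_of_nat_nonneg: "0 \<le> log 2 (real n)"
  by (cases "n = 0") (simp_all add: log_def)

lemma eps_nonneg: "0 \<le> \<gamma> \<Longrightarrow> 0 \<le> eps \<gamma> n k"
  by (simp add: eps_def log2_of_nat_nonneg)

lemma eps_Suc_le:
  assumes "0 \<le> \<gamma>"
  shows "eps \<gamma> n (k + 1) \<le> \<gamma> * eps \<gamma> n k"
proof -
  have "eps \<gamma> n (k + 1) = \<gamma> * eps \<gamma> n k * ((real k + 1) / (real k + 2))^2"
    by (simp add: eps_def power_divide field_simps)
  also have "\<dots> \<le> \<gamma> * eps \<gamma> n k"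
    using assms eps_nonneg by (intro mult_left_le) (simp_all add: power_le_one)
  finally show ?thesis .
qed

theorem lemma2p3:
  fixes n k :: nat and \<gamma> :: real
  assumes "n \<ge> 2" and "0 < \<gamma>" and "\<gamma> < 1/2"
  shows "(\<Sum>(i,j)\<in>{(i,j). i + j = k}. eps \<gamma> n i * eps \<gamma> n j)
       + (\<Sum>(i,j)\<in>{(i,j). i + j + 1 = k}. eps \<gamma> n i * eps \<gamma> n j)
       \<le> eps \<gamma> n k / log 2 (real n)"
proof -
  have "eps \<gamma> n (k + 1) \<le> \<gamma> * eps \<gamma> n k"
    using assms(2) by (intro eps_Suc_le) simp
  also have "\<dots> \<le> 1/2 * eps \<gamma> n k"
    using assms(2,3) eps_nonneg by (intro mult_right_mono) simp_all
  finally have halving: "eps \<gamma> n (k + 1) \<le> 1/2 * eps \<gamma> n k" .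
  have "(\<Sum>(i,j)\<in>{(i,j). i + j = k}. eps \<gamma> n i * eps \<gamma> n j)
      \<le> 2/3 * eps \<gamma> n (k + 1) / log 2 (real n)"
    using assms(2) by (intro eps_antidiagonal_sum_le) simp
  also have "\<dots> \<le> 1/3 * eps \<gamma> n k / log 2 (real n)"
    using halving log2_of_nat_nonneg by (intro divide_right_mono) simp_all
  finally have diagonal: "(\<Sum>(i,j)\<in>{(i,j). i + j = k}. eps \<gamma> n i * eps \<gamma> n j)
      \<le> 1/3 * eps \<gamma> n k / log 2 (real n)" .
  have subdiagonal: "(\<Sum>(i,j)\<in>{(i,j). i + j + 1 = k}. eps \<gamma> n i * eps \<gamma> n j)
      \<le> 2/3 * eps \<gamma> n k / log 2 (real n)"
  proof (cases k)
    case 0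
    then show ?thesis using assms(2) eps_nonneg log2_of_nat_nonneg by simp
  next
    case (Suc m)
    then have "{(i,j). i + j + 1 = k} = {(i,j). i + j = m}" by auto
    then show ?thesis using eps_antidiagonal_sum_le[where m=m] assms(2) Suc by simp
  qed
  from diagonal subdiagonal show ?thesis by linarith
qed

end
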